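(* Let $S$ be a locally compact Hausdorff space with Borel $\sigma$-algebra $\mathscr{S}$, let $\mathscr{S}_0$ be an algebra of subsets of $S$ generating $\mathscr{S}$, and let $X=(X_1,\ldots,X_n)$ be an exchangeable random element of $S^n$ with law $P$, such that: (a) for every $\epsilon>0$ there exist $V\in\mathscr{S}_0$ and a compact $K$ with $V\subset K$ and $\mathbb{P}(X_1\in V)\ge1-\epsilon$; (b) for every $\epsilon>0$ and $V\in\mathscr{S}_0$ there exist an open $O$ and $W\in\mathscr{S}_0$ with $V\subset O\subset W$ and $\mathbb{P}(X_1\in W\setminus V)\le\epsilon$. Suppose there is an increasing sequence $\mathscr{G}_1\subset\mathscr{G}_2\subset\cdots$ of $\sigma$-algebras on $S$ with $\bigcup_k\mathscr{G}_k=\mathscr{S}_0$, and for each $k$ a probability measure $P_k$ on $(S^n,\mathscr{G}_k^n)$ such that \[ \lim_{k\to\infty}\sup_{A\in\mathscr{G}_k^n}|P_k(A)-P(A)|=0, \] and suppose that for some $N>n$ every $P_k$ is $N$-extendible. Then $P$ is $N$-extendible.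
   Context: $\mathscr{G}_k^n$ denotes the product $\sigma$-algebra on $S^n$. A probability measure on $S^m$ (with a product $\sigma$-algebra) is exchangeable if it is invariant under all permutations of coordinates. For $N\ge n$, an exchangeable probability measure $P_n$ on $(S^n,\mathscr{G}^n)$ is $N$-extendible if there is an exchangeable probability measure $P_N$ on $(S^N,\mathscr{G}^N)$ with $P_n(A)=P_N(A\times S^{N-n})$ for all $A\in\mathscr{G}^n$ (here $\mathscr{G}$ is $\mathscr{G}_k$ for $P_k$ and $\mathscr{S}$ for $P$). *)

theory Defs
  imports "HOL-Probability.Probability" "HOL-Combinatorics.Permutations"
begin

text \<open>The product S^m is modelled as functions on {..<m} (extensional), with the
product sigma-algebra PiM {..<m} (\<lambda>_. M).\<close>

definition exchangeable :: "'a measure \<Rightarrow> nat \<Rightarrow> (nat \<Rightarrow> 'a) measure \<Rightarrow> bool" where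
  "exchangeable M m Q \<longleftrightarrow>
     prob_space Q \<and> sets Q = sets (PiM {..<m} (\<lambda>_. M)) \<and>
     (\<forall>\<pi>. \<pi> permutes {..<m} \<longrightarrow>
        distr Q (PiM {..<m} (\<lambda>_. M)) (\<lambda>x. \<lambda>i\<in>{..<m}. x (\<pi> i)) = Q)"

definition extendible :: "'a measure \<Rightarrow> nat \<Rightarrow> nat \<Rightarrow> (nat \<Rightarrow> 'a) measure \<Rightarrow> bool" where
  "extendible M n N Q \<longleftrightarrow>
     exchangeable M n Q \<and>
     (\<exists>QN. exchangeable M N QN \<and>
        (\<forall>A \<in> sets (PiM {..<n} (\<lambda>_. M)).
           measure Q A = measure QN {x \<in> space (PiM {..<N} (\<lambda>_. M)). restrict x {..<n} \<in> A}))"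

end

theory Submission
  imports Defs
begin

text \<open>Extend each \<open>P\<^sub>k\<close> to an exchangeable \<open>Q\<^sub>k\<close> on \<open>N\<close> coordinates and let \<open>\<nu>\<close> be a cluster
  point of the set functions \<open>A \<mapsto> Q\<^sub>k(A)\<close> in the compact product space \<open>[0,1]^sets\<close>. On the sets
  measurable for some product \<open>\<sigma>\<close>-algebra \<open>G\<^sub>j\<^sup>N\<close>, \<open>\<nu>\<close> is finitely additive and invariant under
  permutations, and by the uniform convergence \<open>P\<^sub>k \<rightarrow> P\<close> its marginal on the first \<open>n\<close>
  coordinates is \<open>P\<close>; so every one-dimensional marginal of \<open>\<nu>\<close> is the law of \<open>X\<^sub>1\<close>. Hypotheses
  (a) and (b) make this law inner regular with respect to compact sets on \<open>S\<^sub>0\<close>, hence \<open>\<nu>\<close> is inner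
  regular with respect to compact subsets of \<open>S\<^sup>N\<close> on the algebra generated by rectangles with sides
  in \<open>S\<^sub>0\<close>. The compact class argument makes \<open>\<nu>\<close> \<open>\<sigma>\<close>-additive there, and its Carath\'eodory
  extension is the required exchangeable measure on \<open>S\<^sup>N\<close>.\<close>

lemma compact_sequence_cluster_point:
  fixes f :: "nat \<Rightarrow> 'a::topological_space"
  assumes K: "compact K" and f: "\<And>k. f k \<in> K"
  obtains x where "x \<in> K" "\<And>S. closed S \<Longrightarrow> (\<forall>\<^sub>F k in sequentially. f k \<in> S) \<Longrightarrow> x \<in> S"
proof -
  have "filtermap f sequentially \<noteq> bot" "\<forall>\<^sub>F y in filtermap f sequentially. y \<in> K"
    using f by (simp_all add: filtermap_bot_iff eventually_filtermap)
  with K obtain x where x: "x \<in> K" "inf (nhds x) (filtermap f sequentially) \<noteq> bot"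
    unfolding compact_filter by blast
  have "x \<in> S" if S: "closed S" "\<forall>\<^sub>F k in sequentially. f k \<in> S" for S
  proof (rule ccontr)
    assume "x \<notin> S"
    with S(1) have "\<forall>\<^sub>F y in nhds x. y \<in> - S"
      by (intro eventually_nhds_in_open) (auto simp: closed_def)
    moreover have "\<forall>\<^sub>F y in filtermap f sequentially. y \<in> S"
      using S(2) by (simp add: eventually_filtermap)
    ultimately have "\<forall>\<^sub>F y in inf (nhds x) (filtermap f sequentially). False"
      unfolding eventually_inf by blast
    with x(2) show False by (simp add: eventually_False)
  qed
  with x(1) show thesis by (rule that)
qed

lemma Hausdorff_space_euclidean_t2: "Hausdorff_space (euclidean :: 'a::t2_space topology)"
  unfolding Hausdorff_space_def disjnt_def by (metis separation_t2 open_openin topspace_euclidean)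

lemma compactin_Inter_nonempty:
  fixes C :: "nat \<Rightarrow> 'a set"
  assumes X: "Hausdorff_space X" and C: "\<And>l. compactin X (C l)"
    and ne: "\<And>m. (\<Inter>l\<le>m. C l) \<noteq> {}"
  shows "(\<Inter>l. C l) \<noteq> {}"
proof -
  let ?Y = "subtopology X (C 0)"
  have "(\<Inter>m. \<Inter>l\<le>m. C l) \<noteq> {}"
  proof (rule compact_space_imp_nest[of ?Y])
    show "compact_space ?Y" by (rule compact_space_subtopology[OF C])
    show "closedin ?Y (\<Inter>l\<le>m. C l)" for m
      using compactin_imp_closedin[OF X C] unfolding closedin_subtopology
      by (intro exI[of _ "\<Inter>l\<le>m. C l"]) (auto intro!: closedin_Inter)
    show "decseq (\<lambda>m. \<Inter>l\<le>m. C l)" by (auto simp: decseq_def)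
  qed (rule ne)
  moreover have "(\<Inter>m. \<Inter>l\<le>m. C l) = (\<Inter>l. C l)" by auto
  ultimately show ?thesis by simp
qed

lemma incseq_finite_subset_Union:
  assumes "incseq G" "finite I" "T ` I \<subseteq> (\<Union>k. G k)"
  shows "\<exists>j. T ` I \<subseteq> G j"
  using assms(2,3)
proof (induction I)
  case (insert i I)
  then obtain j k where "T ` I \<subseteq> G j" "T i \<in> G k" by auto
  moreover have "G j \<subseteq> G (max j k)" "G k \<subseteq> G (max j k)"
    using assms(1) by (auto simp: incseq_def)
  ultimately show ?case by blast
qed simp

lemma sets_PiM_sigma_rectangles:
  assumes "UNIV \<in> E" "finite I"
  shows "sets (PiM I (\<lambda>_. sigma (UNIV::'a set) E)) =
     sigma_sets (PiE I (\<lambda>_. UNIV)) {PiE I A | A. \<forall>i\<in>I. A i \<in> E}"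
proof -
  have "sets (PiM I (\<lambda>_. sigma (UNIV::'a set) E)) = sigma_sets (PiE I (\<lambda>_. UNIV))
      {{f\<in>PiE I (\<lambda>_. UNIV). \<forall>i\<in>j. f i \<in> A i} | A j. j \<in> {I} \<and> A \<in> Pi j (\<lambda>_. E)}"
  proof (subst sets_PiM_sigma[where J="{I}"])
    show "\<exists>S\<subseteq>E. countable S \<and> UNIV = \<Union>S" for i
      using assms(1) by (intro exI[of _ "{UNIV}"]) auto
  qed (use assms(2) in \<open>auto intro!: sets_measure_of\<close>)
  also have "{{f\<in>PiE I (\<lambda>_. UNIV). \<forall>i\<in>j. f i \<in> A i} | A j. j \<in> {I} \<and> A \<in> Pi j (\<lambda>_. E)}
      = {PiE I A | A. \<forall>i\<in>I. A i \<in> E}"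
    by (auto simp: PiE_def Pi_def)
  finally show ?thesis .
qed

lemma sets_PiM_sigma_mono:
  assumes "E \<subseteq> F" "UNIV \<in> E" "finite I"
  shows "sets (PiM I (\<lambda>_. sigma (UNIV::'a set) E)) \<subseteq> sets (PiM I (\<lambda>_. sigma UNIV F))"
proof -
  have "UNIV \<in> F" using assms(1,2) by blast
  then show ?thesis
    unfolding sets_PiM_sigma_rectangles[OF assms(2,3)] sets_PiM_sigma_rectangles[OF \<open>UNIV \<in> F\<close> assms(3)]
    using assms(1) by (intro sigma_sets_mono') blast
qed

section \<open>Compact classes\<close>

lemma sum_quarter_geometric_less:
  fixes d :: real
  assumes "0 < d"
  shows "(\<Sum>l\<le>m. d / 2 ^ Suc (Suc l)) < d"
proof -
  have "(\<Sum>l\<le>m. d / 2 ^ Suc (Suc l)) = d / 2 - d / 2 ^ Suc (Suc m)"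
    by (induction m) (simp_all add: field_simps)
  moreover have "0 < d / 2 ^ Suc (Suc m)" using assms by simp
  ultimately show ?thesis using assms by linarith
qed

context ring_of_sets
begin

lemma additive_mono_real:
  fixes f :: "'a set \<Rightarrow> real"
  assumes f: "additive M f" "\<And>A. A \<in> M \<Longrightarrow> 0 \<le> f A" and AB: "A \<in> M" "B \<in> M" "A \<subseteq> B"
  shows "f A \<le> f B"
proof -
  have BA: "B - A \<in> M" using AB by auto
  with AB have "f B = f A + f (B - A)"
    using additiveD[OF f(1), of A "B - A"] by (simp add: Un_absorb1)
  with f(2)[OF BA] show ?thesis by simp
qed

lemma additive_subadditive_real:
  fixes f :: "'a set \<Rightarrow> real"
  assumes f: "additive M f" "\<And>A. A \<in> M \<Longrightarrow> 0 \<le> f A" and A: "finite I" "A ` I \<subseteq> M"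
  shows "f (\<Union>i\<in>I. A i) \<le> (\<Sum>i\<in>I. f (A i))"
  using A
proof (induction I)
  case empty
  have "f {} = f {} + f {}" using additiveD[OF f(1), of "{}" "{}"] by simp
  then show ?case by simp
next
  case (insert i I)
  have U: "(\<Union>j\<in>I. A j) \<in> M" using insert by auto
  have "(\<Union>j\<in>insert i I. A j) = A i \<union> ((\<Union>j\<in>I. A j) - A i)" by auto
  also have "f \<dots> = f (A i) + f ((\<Union>j\<in>I. A j) - A i)"
    using insert.prems U by (intro additiveD[OF f(1)]) auto
  also have "\<dots> \<le> f (A i) + f (\<Union>j\<in>I. A j)"
    using insert.prems U by (auto intro!: additive_mono_real[OF f])
  finally show ?case using insert by simp
qed

text \<open>The compact class argument: with \<open>B\<^sub>m \<subseteq> C\<^sub>m \<subseteq> A\<^sub>m\<close> and \<open>f (A\<^sub>m - B\<^sub>m) \<le> d / 2\<^sup>m\<^sup>+\<^sup>2\<close>,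
  the set \<open>A\<^sub>m - \<Inter>\<^sub>l\<^sub>\<le>\<^sub>m B\<^sub>l\<close> has content \<open>< d \<le> f A\<^sub>m\<close>, so the compact sets \<open>C\<^sub>m\<close> have the
  finite intersection property.\<close>

lemma compact_inner_approx_Inter_nonempty:
  fixes f :: "'a set \<Rightarrow> real" and A :: "nat \<Rightarrow> 'a set"
  assumes f: "additive M f" "\<And>A. A \<in> M \<Longrightarrow> 0 \<le> f A" and X: "Hausdorff_space X"
    and A: "range A \<subseteq> M" "decseq A"
    and approx: "\<And>i e. 0 < e \<Longrightarrow> \<exists>B\<in>M. \<exists>C. B \<subseteq> C \<and> C \<subseteq> A i \<and> compactin X C \<and> f (A i - B) \<le> e"
    and d: "0 < d" "\<And>m. d \<le> f (A m)"
  shows "(\<Inter>i. A i) \<noteq> {}"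
proof -
  have "\<forall>m. \<exists>B\<in>M. \<exists>C. B \<subseteq> C \<and> C \<subseteq> A m \<and> compactin X C \<and> f (A m - B) \<le> d / 2 ^ Suc (Suc m)"
    using d(1) by (intro allI approx) simp
  then obtain B C where B: "\<And>m. B m \<in> M" and C: "\<And>m. B m \<subseteq> C m" "\<And>m. C m \<subseteq> A m"
      "\<And>m. compactin X (C m)" and BA: "\<And>m. f (A m - B m) \<le> d / 2 ^ Suc (Suc m)"
    by metis
  have "(\<Inter>l\<le>m. B l) \<noteq> {}" for m
  proof
    assume empty: "(\<Inter>l\<le>m. B l) = {}"
    have AM: "A l \<in> M" for l using A(1) by auto
    have "A m \<subseteq> (\<Union>l\<le>m. A l - B l)"
    proof
      fix x assume "x \<in> A m"
      moreover obtain l where "l \<le> m" "x \<notin> B l" using empty by auto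
      ultimately show "x \<in> (\<Union>l\<le>m. A l - B l)"
        using A(2) by (auto simp: decseq_def)
    qed
    then have "f (A m) \<le> f (\<Union>l\<le>m. A l - B l)"
      using AM B by (intro additive_mono_real[OF f] finite_UN) auto
    also have "\<dots> \<le> (\<Sum>l\<le>m. f (A l - B l))"
      using AM B by (intro additive_subadditive_real[OF f]) (auto intro: Diff)
    also have "\<dots> \<le> (\<Sum>l\<le>m. d / 2 ^ Suc (Suc l))"
      by (intro sum_mono BA)
    also have "\<dots> < d"
      using d(1) by (rule sum_quarter_geometric_less)
    finally show False using d(2)[of m] by linarith
  qed
  moreover have "(\<Inter>l\<le>m. B l) \<subseteq> (\<Inter>l\<le>m. C l)" for m
    using C(1) by auto
  ultimately have "(\<Inter>l\<le>m. C l) \<noteq> {}" for m by (metis subset_empty)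
  then have "(\<Inter>l. C l) \<noteq> {}" by (rule compactin_Inter_nonempty[OF X C(3)])
  moreover have "(\<Inter>l. C l) \<subseteq> (\<Inter>l. A l)" using C(2) by auto
  ultimately show ?thesis by (metis subset_empty)
qed

lemma compact_inner_approx_empty_continuous:
  fixes f :: "'a set \<Rightarrow> real" and A :: "nat \<Rightarrow> 'a set"
  assumes f: "additive M f" "\<And>A. A \<in> M \<Longrightarrow> 0 \<le> f A" and X: "Hausdorff_space X"
    and A: "range A \<subseteq> M" "decseq A" "(\<Inter>i. A i) = {}"
    and approx: "\<And>i e. 0 < e \<Longrightarrow> \<exists>B\<in>M. \<exists>C. B \<subseteq> C \<and> C \<subseteq> A i \<and> compactin X C \<and> f (A i - B) \<le> e"
  shows "(\<lambda>i. f (A i)) \<longlonglongrightarrow> 0"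
proof (rule LIMSEQ_I)
  fix r :: real assume r: "0 < r"
  obtain m where m: "f (A m) < r"
  proof (rule ccontr)
    assume "\<not> thesis"
    with that have "r \<le> f (A m)" for m by (meson not_less)
    with compact_inner_approx_Inter_nonempty[OF f X A(1,2) approx r] A(3) show False by blast
  qed
  have "norm (f (A i)) < r" if "m \<le> i" for i
  proof -
    have "0 \<le> f (A i)" using f(2) A(1) by auto
    moreover have "f (A i) \<le> f (A m)"
      using A(1,2) that by (intro additive_mono_real[OF f]) (auto simp: decseq_def)
    ultimately show ?thesis using m by simp
  qed
  then show "\<exists>m. \<forall>i\<ge>m. norm (f (A i) - 0) < r" by auto
qed

end

section \<open>The limit content\<close>

locale extendible_limit =
  fixes S0 :: "'a::t2_space set set"
    and P :: "(nat \<Rightarrow> 'a) measure"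
    and G :: "nat \<Rightarrow> 'a set set"
    and Pk :: "nat \<Rightarrow> (nat \<Rightarrow> 'a) measure"
    and n N :: nat
  assumes alg: "algebra UNIV S0"
    and gen: "sigma_sets UNIV S0 = sets (borel :: 'a measure)"
    and n_pos: "0 < n"
    and exch: "exchangeable borel n P"
    and tight: "\<And>\<epsilon>. \<epsilon> > 0 \<Longrightarrow> \<exists>V \<in> S0. \<exists>K. compact K \<and> V \<subseteq> K \<and>
        measure P {x \<in> space (PiM {..<n} (\<lambda>_. borel)). x 0 \<in> V} \<ge> 1 - \<epsilon>"
    and reg: "\<And>\<epsilon> V. \<epsilon> > 0 \<Longrightarrow> V \<in> S0 \<Longrightarrow> \<exists>U W. open U \<and> W \<in> S0 \<and> V \<subseteq> U \<and> U \<subseteq> W \<and>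
        measure P {x \<in> space (PiM {..<n} (\<lambda>_. borel)). x 0 \<in> W - V} \<le> \<epsilon>"
    and G_sigma: "\<And>k. sigma_algebra UNIV (G k)"
    and G_inc: "\<And>k. G k \<subseteq> G (Suc k)"
    and G_union: "(\<Union>k. G k) = S0"
    and Pk_prob: "\<And>k. prob_space (Pk k)"
    and conv: "(\<lambda>k. SUP A \<in> sets (PiM {..<n} (\<lambda>_. sigma UNIV (G k))).
                  \<bar>measure (Pk k) A - measure P A\<bar>) \<longlonglongrightarrow> 0"
    and Nn: "N > n"
    and Pk_ext: "\<And>k. extendible (sigma UNIV (G k)) n N (Pk k)"
begin

definition \<Omega> :: "nat \<Rightarrow> (nat \<Rightarrow> 'a) set" where
  "\<Omega> m = PiE {..<m} (\<lambda>_. UNIV)"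

abbreviation prodG :: "nat \<Rightarrow> nat \<Rightarrow> (nat \<Rightarrow> 'a) measure" where
  "prodG j m \<equiv> PiM {..<m} (\<lambda>_. sigma UNIV (G j))"

abbreviation prodB :: "nat \<Rightarrow> (nat \<Rightarrow> 'a) measure" where
  "prodB m \<equiv> PiM {..<m} (\<lambda>_. borel)"

lemma space_prodG [simp]: "space (prodG j m) = \<Omega> m"
  by (simp add: space_PiM \<Omega>_def)

lemma space_prodB [simp]: "space (prodB m) = \<Omega> m"
  by (simp add: space_PiM \<Omega>_def)

lemma incseq_G: "incseq G"
  using G_inc by (rule incseq_SucI)

lemma sets_sigma_G: "sets (sigma UNIV (G j)) = G j"
  using G_sigma[of j] by (simp add: sigma_algebra.sigma_sets_eq)

lemma UNIV_in_G: "UNIV \<in> G j"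
  using G_sigma[of j] unfolding sigma_algebra_iff2 by (metis Diff_empty)

lemma G_subset_S0: "G j \<subseteq> S0"
  using G_union by blast

lemma UNIV_in_S0: "UNIV \<in> S0"
  using UNIV_in_G G_subset_S0 by blast

lemma S0_Int: "A \<in> S0 \<Longrightarrow> B \<in> S0 \<Longrightarrow> A \<inter> B \<in> S0"
  and S0_Un: "A \<in> S0 \<Longrightarrow> B \<in> S0 \<Longrightarrow> A \<union> B \<in> S0"
  and S0_Diff: "A \<in> S0 \<Longrightarrow> B \<in> S0 \<Longrightarrow> A - B \<in> S0"
  and S0_Compl: "A \<in> S0 \<Longrightarrow> - A \<in> S0"
proof -
  interpret algebra UNIV S0 by (rule alg)
  show "A \<in> S0 \<Longrightarrow> B \<in> S0 \<Longrightarrow> A \<inter> B \<in> S0" "A \<in> S0 \<Longrightarrow> B \<in> S0 \<Longrightarrow> A \<union> B \<in> S0"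
    "A \<in> S0 \<Longrightarrow> B \<in> S0 \<Longrightarrow> A - B \<in> S0"
    by auto
  show "A \<in> S0 \<Longrightarrow> - A \<in> S0" using compl_sets by (metis Compl_eq_Diff_UNIV)
qed

lemma S0_subset_borel: "S0 \<subseteq> sets borel"
  using gen sigma_sets.Basic by blast

lemma sets_prodG_mono: "j \<le> k \<Longrightarrow> sets (prodG j m) \<subseteq> sets (prodG k m)"
  using incseq_G by (intro sets_PiM_sigma_mono) (auto simp: incseq_def UNIV_in_G)

lemma sets_prodB_eq: "sets (prodB m) = sets (PiM {..<m} (\<lambda>_. sigma UNIV S0))"
  using gen by (intro sets_PiM_cong) (simp_all add: sets_measure_of)

lemma sets_prodG_subset_prodB: "sets (prodG j m) \<subseteq> sets (prodB m)"
  unfolding sets_prodB_eq by (rule sets_PiM_sigma_mono) (auto simp: G_subset_S0 UNIV_in_G)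

lemma rectangle_in_prodG:
  assumes "\<And>l. l < m \<Longrightarrow> V l \<in> S0"
  obtains j where "PiE {..<m} V \<in> sets (prodG j m)"
proof -
  obtain j where "V ` {..<m} \<subseteq> G j"
    using incseq_finite_subset_Union[OF incseq_G, of "{..<m}" V] assms G_union by auto
  then have "PiE {..<m} V \<in> sets (prodG j m)"
    by (intro sets_PiM_I_finite) (auto simp: sets_sigma_G)
  then show thesis by (rule that)
qed

definition rectangles :: "nat \<Rightarrow> (nat \<Rightarrow> 'a) set set" where
  "rectangles m = {PiE {..<m} V | V. \<forall>l\<in>{..<m}. V l \<in> S0}"

lemma sets_prodB_rectangles: "sets (prodB m) = sigma_sets (\<Omega> m) (rectangles m)"
  unfolding sets_prodB_eq \<Omega>_def rectangles_def
  by (subst sets_PiM_sigma_rectangles) (auto simp: UNIV_in_S0)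

lemma prob_space_eq_on_rectangles:
  assumes M: "prob_space M" "sets M = sets (prodB m)"
    and M': "prob_space M'" "sets M' = sets (prodB m)"
    and eq: "\<And>X. X \<in> rectangles m \<Longrightarrow> measure M X = measure M' X"
  shows "M = M'"
proof (rule measure_eqI_generator_eq[where E = "rectangles m" and \<Omega> = "\<Omega> m" and A = "\<lambda>_. \<Omega> m"])
  show "Int_stable (rectangles m)"
  proof (rule Int_stableI)
    fix X Y assume "X \<in> rectangles m" "Y \<in> rectangles m"
    then obtain V W where "X = PiE {..<m} V" "Y = PiE {..<m} W"
      "\<forall>l\<in>{..<m}. V l \<in> S0" "\<forall>l\<in>{..<m}. W l \<in> S0"
      unfolding rectangles_def by blast
    then show "X \<inter> Y \<in> rectangles m"
      unfolding rectangles_def by (intro CollectI exI[of _ "\<lambda>l. V l \<inter> W l"]) (simp add: PiE_Int S0_Int)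
  qed
  show "rectangles m \<subseteq> Pow (\<Omega> m)"
    unfolding rectangles_def \<Omega>_def by (auto simp: PiE_def Pi_def)
  have "\<Omega> m \<in> rectangles m"
    unfolding rectangles_def \<Omega>_def using UNIV_in_S0 by auto
  then show "range (\<lambda>_. \<Omega> m) \<subseteq> rectangles m" by auto
  have "space M = \<Omega> m" using sets_eq_imp_space_eq[OF M(2)] by simp
  then show "emeasure M (\<Omega> m) \<noteq> \<infinity>" using prob_space.emeasure_space_1[OF M(1)] by simp
  fix X assume "X \<in> rectangles m"
  then show "emeasure M X = emeasure M' X"
    using eq[of X] M M' by (simp add: finite_measure.emeasure_eq_measure prob_space.finite_measure)
qed (use M M' sets_prodB_rectangles in auto)

definition level_sets :: "(nat \<Rightarrow> 'a) set set" where
  "level_sets = (\<Union>j. sets (prodG j N))"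

lemma level_sets_common_level:
  assumes "A \<in> level_sets" "B \<in> level_sets"
  obtains j where "A \<in> sets (prodG j N)" "B \<in> sets (prodG j N)"
proof -
  obtain i j where "A \<in> sets (prodG i N)" "B \<in> sets (prodG j N)"
    using assms unfolding level_sets_def by blast
  then show thesis
    using sets_prodG_mono[of i "max i j" N] sets_prodG_mono[of j "max i j" N] that by auto
qed

lemma algebra_level_sets: "algebra (\<Omega> N) level_sets"
  unfolding algebra_iff_Un
proof (intro conjI ballI)
  show "level_sets \<subseteq> Pow (\<Omega> N)"
    unfolding level_sets_def using sets.sets_into_space by fastforce
  show "{} \<in> level_sets" unfolding level_sets_def by auto
  fix A assume A: "A \<in> level_sets"
  then show "\<Omega> N - A \<in> level_sets"
    unfolding level_sets_def using sets.compl_sets by fastforce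
  fix B assume "B \<in> level_sets"
  with A obtain j where "A \<in> sets (prodG j N)" "B \<in> sets (prodG j N)"
    by (rule level_sets_common_level)
  then show "A \<union> B \<in> level_sets" unfolding level_sets_def by blast
qed

sublocale level: algebra "\<Omega> N" level_sets
  by (rule algebra_level_sets)

lemma level_sets_subset_prodB: "level_sets \<subseteq> sets (prodB N)"
  unfolding level_sets_def using sets_prodG_subset_prodB by blast

lemma rectangle_in_level_sets:
  "(\<And>l. l < N \<Longrightarrow> V l \<in> S0) \<Longrightarrow> PiE {..<N} V \<in> level_sets"
  unfolding level_sets_def by (erule rectangle_in_prodG) blast

definition Q :: "nat \<Rightarrow> (nat \<Rightarrow> 'a) measure" where
  "Q k = (SOME Q. exchangeable (sigma UNIV (G k)) N Q \<and>
     (\<forall>A \<in> sets (prodG k n). measure (Pk k) A = measure Q {x \<in> space (prodG k N). restrict x {..<n} \<in> A}))"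

lemma Q: "exchangeable (sigma UNIV (G k)) N (Q k)"
  "\<And>A. A \<in> sets (prodG k n) \<Longrightarrow> measure (Pk k) A = measure (Q k) {x \<in> \<Omega> N. restrict x {..<n} \<in> A}"
  using someI_ex[of "\<lambda>Q. exchangeable (sigma UNIV (G k)) N Q \<and>
     (\<forall>A \<in> sets (prodG k n). measure (Pk k) A = measure Q {x \<in> space (prodG k N). restrict x {..<n} \<in> A})"]
    Pk_ext[of k] unfolding extendible_def Q_def[symmetric] by auto

lemma prob_space_Q: "prob_space (Q k)"
  and sets_Q: "sets (Q k) = sets (prodG k N)"
  and Q_permute: "\<pi> permutes {..<N} \<Longrightarrow> distr (Q k) (prodG k N) (\<lambda>x. \<lambda>i\<in>{..<N}. x (\<pi> i)) = Q k"
  using Q(1) unfolding exchangeable_def by auto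

lemma space_Q: "space (Q k) = \<Omega> N"
  using sets_eq_imp_space_eq[OF sets_Q[of k]] by simp

lemma level_sets_eventually_in_Q:
  assumes "A \<in> level_sets"
  obtains j where "\<And>k. j \<le> k \<Longrightarrow> A \<in> sets (Q k)"
  using assms sets_prodG_mono unfolding level_sets_def sets_Q by blast

text \<open>A cluster point of the set functions \<open>A \<mapsto> Q\<^sub>k(A)\<close> in the product topology; it exists by
  Tychonoff's theorem, as they all lie in \<open>[0,1]^sets\<close>.\<close>

definition \<nu> :: "(nat \<Rightarrow> 'a) set \<Rightarrow> real" where
  "\<nu> = (SOME \<nu>. \<forall>S. closed S \<longrightarrow> (\<forall>\<^sub>F k in sequentially. (\<lambda>A. measure (Q k) A) \<in> S) \<longrightarrow> \<nu> \<in> S)"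

lemma nu_in_closed:
  assumes "closed S" "\<And>k. j \<le> k \<Longrightarrow> (\<lambda>A. measure (Q k) A) \<in> S"
  shows "\<nu> \<in> S"
proof -
  have "compactin (product_topology (\<lambda>_. euclidean) UNIV) (PiE UNIV (\<lambda>_. {0..1::real}))"
    by (simp add: compactin_PiE)
  then have "compact (PiE UNIV (\<lambda>_::(nat \<Rightarrow> 'a) set. {0..1::real}))"
    by (simp add: euclidean_product_topology)
  moreover have "(\<lambda>A. measure (Q k) A) \<in> PiE UNIV (\<lambda>_. {0..1})" for k
    using prob_space.prob_le_1[OF prob_space_Q] by auto
  ultimately have "\<exists>\<nu>. \<forall>S. closed S \<longrightarrow> (\<forall>\<^sub>F k in sequentially. (\<lambda>A. measure (Q k) A) \<in> S) \<longrightarrow> \<nu> \<in> S"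
    by (metis compact_sequence_cluster_point)
  from someI_ex[OF this]
  have "\<forall>S. closed S \<longrightarrow> (\<forall>\<^sub>F k in sequentially. (\<lambda>A. measure (Q k) A) \<in> S) \<longrightarrow> \<nu> \<in> S"
    unfolding \<nu>_def[symmetric] .
  with assms show ?thesis by (auto simp: eventually_sequentially)
qed

lemma nu_nonneg: "0 \<le> \<nu> A"
proof -
  have "closed {h :: (nat \<Rightarrow> 'a) set \<Rightarrow> real. 0 \<le> h A}"
    by (intro closed_Collect_le continuous_on_const continuous_on_product_coordinates)
  then have "\<nu> \<in> {h. 0 \<le> h A}" by (rule nu_in_closed) simp
  then show ?thesis by simp
qed

lemma nu_space: "\<nu> (\<Omega> N) = 1"
proof -
  have "closed {h :: (nat \<Rightarrow> 'a) set \<Rightarrow> real. h (\<Omega> N) = 1}"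
    by (intro closed_Collect_eq continuous_on_const continuous_on_product_coordinates)
  then have "\<nu> \<in> {h. h (\<Omega> N) = 1}"
    by (rule nu_in_closed) (use prob_space.prob_space[OF prob_space_Q] space_Q in simp)
  then show ?thesis by simp
qed

lemma nu_additive: "additive level_sets \<nu>"
  unfolding additive_def
proof (intro ballI impI)
  fix A B assume A: "A \<in> level_sets" and B: "B \<in> level_sets" and AB: "A \<inter> B = {}"
  obtain j where j: "A \<in> sets (Q k)" "B \<in> sets (Q k)" if "j \<le> k" for k
    using level_sets_eventually_in_Q[OF A] level_sets_eventually_in_Q[OF B]
    by (metis max.cobounded1 max.cobounded2 order.trans)
  have "closed {h :: (nat \<Rightarrow> 'a) set \<Rightarrow> real. h (A \<union> B) = h A + h B}"
    by (intro closed_Collect_eq continuous_intros continuous_on_product_coordinates)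
  moreover have "measure (Q k) (A \<union> B) = measure (Q k) A + measure (Q k) B" if "j \<le> k" for k
    using j[OF that] AB
    by (intro finite_measure.finite_measure_Union prob_space.finite_measure prob_space_Q)
  ultimately have "\<nu> \<in> {h. h (A \<union> B) = h A + h B}"
    by (intro nu_in_closed[of _ j]) auto
  then show "\<nu> (A \<union> B) = \<nu> A + \<nu> B" by simp
qed

lemma measurable_permute:
  assumes "\<pi> permutes {..<N}"
  shows "(\<lambda>x. \<lambda>i\<in>{..<N}. x (\<pi> i)) \<in> measurable (PiM {..<N} (\<lambda>_. M)) (PiM {..<N} (\<lambda>_. M))"
  by (rule measurable_restrict, rule measurable_component_singleton)
    (use permutes_in_image[OF assms] in auto)

lemma nu_permute:
  assumes \<pi>: "\<pi> permutes {..<N}" and A: "A \<in> level_sets"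
  shows "{x \<in> \<Omega> N. (\<lambda>i\<in>{..<N}. x (\<pi> i)) \<in> A} \<in> level_sets" (is "?B \<in> _")
    and "\<nu> {x \<in> \<Omega> N. (\<lambda>i\<in>{..<N}. x (\<pi> i)) \<in> A} = \<nu> A"
proof -
  let ?f = "\<lambda>x. \<lambda>i\<in>{..<N}. x (\<pi> i)"
  have B: "?B = ?f -` A \<inter> space (prodG k N)" for k by auto
  have B_sets: "?B \<in> sets (prodG k N)" if "A \<in> sets (prodG k N)" for k
    unfolding B[of k] using measurable_permute[OF \<pi>] that by (rule measurable_sets)
  then show "?B \<in> level_sets" using A unfolding level_sets_def by blast
  obtain j where j: "\<And>k. j \<le> k \<Longrightarrow> A \<in> sets (Q k)"
    using level_sets_eventually_in_Q[OF A] by blast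
  have "measure (Q k) ?B = measure (Q k) A" if "j \<le> k" for k
  proof -
    have "measure (Q k) A = measure (distr (Q k) (prodG k N) ?f) A"
      using Q_permute[OF \<pi>] by simp
    also have "\<dots> = measure (Q k) (?f -` A \<inter> space (Q k))"
      using j[OF that] measurable_permute[OF \<pi>]
      by (intro measure_distr) (simp_all add: sets_Q measurable_cong_sets[OF sets_Q refl])
    also have "?f -` A \<inter> space (Q k) = ?B" by (auto simp: space_Q)
    finally show ?thesis by simp
  qed
  moreover have "closed {h :: (nat \<Rightarrow> 'a) set \<Rightarrow> real. h ?B = h A}"
    by (intro closed_Collect_eq continuous_on_product_coordinates)
  ultimately have "\<nu> \<in> {h. h ?B = h A}"
    by (intro nu_in_closed[of _ j]) auto
  then show "\<nu> ?B = \<nu> A" by simp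
qed

lemma prob_space_P: "prob_space P" and sets_P: "sets P = sets (prodB n)"
  using exch unfolding exchangeable_def by auto

lemma Pk_uniformly_close:
  assumes "0 < e"
  obtains k0 where "\<And>k A. k0 \<le> k \<Longrightarrow> A \<in> sets (prodG k n) \<Longrightarrow> \<bar>measure (Pk k) A - measure P A\<bar> < e"
proof -
  obtain k0 where "\<forall>k\<ge>k0. norm ((SUP A \<in> sets (prodG k n). \<bar>measure (Pk k) A - measure P A\<bar>) - 0) < e"
    using LIMSEQ_D[OF conv assms] by blast
  then have k0: "(SUP A \<in> sets (prodG k n). \<bar>measure (Pk k) A - measure P A\<bar>) < e" if "k0 \<le> k" for k
    using that by (auto simp: abs_less_iff)
  have "\<bar>measure (Pk k) A - measure P A\<bar> < e" if "k0 \<le> k" "A \<in> sets (prodG k n)" for k A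
  proof -
    have "\<bar>measure (Pk k) X - measure P X\<bar> \<le> 1" for X
      using prob_space.prob_le_1[OF Pk_prob[of k], of X] prob_space.prob_le_1[OF prob_space_P, of X]
        measure_nonneg[of "Pk k" X] measure_nonneg[of P X] by linarith
    then have "\<bar>measure (Pk k) A - measure P A\<bar> \<le> (SUP A \<in> sets (prodG k n). \<bar>measure (Pk k) A - measure P A\<bar>)"
      using that(2) by (intro cSUP_upper bdd_aboveI2) auto
    with k0[OF that(1)] show ?thesis by linarith
  qed
  then show thesis by (rule that)
qed

lemma nu_marginal:
  assumes A: "A \<in> sets (prodG j n)"
  shows "{x \<in> \<Omega> N. restrict x {..<n} \<in> A} \<in> level_sets" (is "?B \<in> _")
    and "\<nu> {x \<in> \<Omega> N. restrict x {..<n} \<in> A} = measure P A"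
proof -
  have B_sets: "?B \<in> sets (prodG j N)"
  proof -
    have "(\<lambda>x. restrict x {..<n}) \<in> measurable (prodG j N) (prodG j n)"
      using Nn by (intro measurable_restrict_subset) auto
    from measurable_sets[OF this A] show ?thesis by (simp add: Int_def conj_commute)
  qed
  then show "?B \<in> level_sets" unfolding level_sets_def by blast
  have "\<bar>\<nu> ?B - measure P A\<bar> \<le> e" if e: "0 < e" for e
  proof -
    obtain k0 where k0: "\<And>k A. k0 \<le> k \<Longrightarrow> A \<in> sets (prodG k n) \<Longrightarrow> \<bar>measure (Pk k) A - measure P A\<bar> < e"
      using Pk_uniformly_close[OF e] by blast
    have "closed {h :: (nat \<Rightarrow> 'a) set \<Rightarrow> real. \<bar>h ?B - measure P A\<bar> \<le> e}"
      by (intro closed_Collect_le continuous_intros continuous_on_product_coordinates)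
    moreover have "\<bar>measure (Q k) ?B - measure P A\<bar> \<le> e" if "max j k0 \<le> k" for k
    proof -
      have A': "A \<in> sets (prodG k n)" using A sets_prodG_mono[of j k n] that by auto
      then have "\<bar>measure (Pk k) A - measure P A\<bar> < e" using k0 that by simp
      then show ?thesis using Q(2)[OF A'] by simp
    qed
    ultimately have "\<nu> \<in> {h. \<bar>h ?B - measure P A\<bar> \<le> e}"
      by (intro nu_in_closed[of _ "max j k0"]) auto
    then show ?thesis by simp
  qed
  then show "\<nu> ?B = measure P A"
    using field_le_epsilon[of "\<bar>\<nu> ?B - measure P A\<bar>" 0] by simp
qed

definition P\<^sub>1 :: "'a measure" where
  "P\<^sub>1 = distr P borel (\<lambda>x. x 0)"

lemma measurable_coordinate_0: "(\<lambda>x. x 0) \<in> measurable (PiM {..<n} (\<lambda>_. M)) M"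
  using n_pos by (intro measurable_component_singleton) auto

lemma measurable_P_coordinate_0: "(\<lambda>x. x 0) \<in> measurable P borel"
  using measurable_coordinate_0 by (simp add: measurable_cong_sets[OF sets_P refl])

lemma prob_space_P1: "prob_space P\<^sub>1"
  unfolding P\<^sub>1_def by (intro prob_space.prob_space_distr prob_space_P measurable_P_coordinate_0)

lemma measure_P1:
  assumes "V \<in> sets borel"
  shows "measure P\<^sub>1 V = measure P {x \<in> space (prodB n). x 0 \<in> V}"
proof -
  have "measure P\<^sub>1 V = measure P ((\<lambda>x. x 0) -` V \<inter> space P)"
    unfolding P\<^sub>1_def using measurable_P_coordinate_0 assms by (intro measure_distr) simp_all
  also have "(\<lambda>x. x 0) -` V \<inter> space P = {x \<in> space (prodB n). x 0 \<in> V}"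
    using sets_eq_imp_space_eq[OF sets_P] by auto
  finally show ?thesis .
qed

lemma measure_P1_S0: "V \<in> S0 \<Longrightarrow> measure P\<^sub>1 V = measure P {x \<in> space (prodB n). x 0 \<in> V}"
  using S0_subset_borel by (intro measure_P1) auto

lemma P1_tight:
  assumes "0 < e"
  obtains V K where "V \<in> S0" "compact K" "V \<subseteq> K" "1 - e \<le> measure P\<^sub>1 V"
proof -
  from tight[OF assms] obtain V K where "V \<in> S0" "compact K" "V \<subseteq> K"
    "1 - e \<le> measure P {x \<in> space (prodB n). x 0 \<in> V}"
    by blast
  with that show thesis by (simp add: measure_P1_S0)
qed

lemma P1_open_approx:
  assumes "0 < e" "V \<in> S0"
  obtains U W where "open U" "W \<in> S0" "V \<subseteq> U" "U \<subseteq> W" "measure P\<^sub>1 (W - V) \<le> e"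
proof -
  from reg[OF assms] obtain U W where "open U" "W \<in> S0" "V \<subseteq> U" "U \<subseteq> W"
    "measure P {x \<in> space (prodB n). x 0 \<in> W - V} \<le> e"
    by blast
  moreover have "W - V \<in> S0" using \<open>W \<in> S0\<close> assms(2) by (rule S0_Diff)
  ultimately show thesis using that by (simp add: measure_P1_S0)
qed

lemma S0_inner_compact:
  assumes V: "V \<in> S0" and e: "0 < e"
  obtains T K where "T \<in> S0" "compact K" "T \<subseteq> K" "K \<subseteq> V" "measure P\<^sub>1 (V - T) \<le> e"
proof -
  interpret P\<^sub>1: prob_space P\<^sub>1 by (rule prob_space_P1)
  have S0_sets: "X \<in> sets P\<^sub>1" if "X \<in> S0" for X
    using that S0_subset_borel by (auto simp: P\<^sub>1_def)
  obtain V' K' where V': "V' \<in> S0" "compact K'" "V' \<subseteq> K'" "1 - e/2 \<le> measure P\<^sub>1 V'"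
    using P1_tight[of "e/2"] e by auto
  obtain U W where UW: "open U" "W \<in> S0" "- V \<subseteq> U" "U \<subseteq> W" "measure P\<^sub>1 (W - - V) \<le> e/2"
    using P1_open_approx[of "e/2" "- V"] e S0_Compl[OF V] by auto
  show thesis
  proof (rule that)
    show "V' - W \<in> S0" using V'(1) UW(2) by (rule S0_Diff)
    show "compact (K' - U)"
      unfolding Diff_eq using V'(2) UW(1) by (intro compact_Int_closed closed_Compl)
    show "V' - W \<subseteq> K' - U" using V'(3) UW(4) by auto
    show "K' - U \<subseteq> V" using UW(3) by auto
    have "V - (V' - W) \<subseteq> - V' \<union> (W - - V)" by auto
    then have "measure P\<^sub>1 (V - (V' - W)) \<le> measure P\<^sub>1 (- V' \<union> (W - - V))"
      using V V'(1) UW(2) by (intro P\<^sub>1.finite_measure_mono S0_sets S0_Un S0_Diff S0_Compl)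
    also have "\<dots> \<le> measure P\<^sub>1 (- V') + measure P\<^sub>1 (W - - V)"
      using V V'(1) UW(2) by (intro measure_Un_le S0_sets S0_Diff S0_Compl)
    also have "measure P\<^sub>1 (- V') = 1 - measure P\<^sub>1 V'"
      using P\<^sub>1.prob_compl[OF S0_sets[OF V'(1)]] unfolding Compl_eq_Diff_UNIV
      by (simp add: P\<^sub>1_def)
    finally show "measure P\<^sub>1 (V - (V' - W)) \<le> e" using V'(4) UW(5) by linarith
  qed
qed

definition cylinder :: "nat \<Rightarrow> 'a set \<Rightarrow> (nat \<Rightarrow> 'a) set" where
  "cylinder i V = {x \<in> \<Omega> N. x i \<in> V}"

lemma nu_cylinder:
  assumes i: "i < N" and V: "V \<in> S0"
  shows "cylinder i V \<in> level_sets" and "\<nu> (cylinder i V) = measure P\<^sub>1 V"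
proof -
  obtain j where "V \<in> G j" using V G_union by blast
  then have "(\<lambda>x. x 0) -` V \<inter> space (prodG j n) \<in> sets (prodG j n)"
    using measurable_coordinate_0 by (intro measurable_sets) (auto simp: sets_sigma_G)
  moreover have "(\<lambda>x. x 0) -` V \<inter> space (prodG j n) = {x \<in> space (prodB n). x 0 \<in> V}" by auto
  ultimately have A0: "{x \<in> space (prodB n). x 0 \<in> V} \<in> sets (prodG j n)" by simp
  have eq0: "{x \<in> \<Omega> N. restrict x {..<n} \<in> {x \<in> space (prodB n). x 0 \<in> V}} = cylinder 0 V"
    using n_pos by (auto simp: cylinder_def \<Omega>_def)
  have D0: "cylinder 0 V \<in> level_sets"
    using nu_marginal(1)[OF A0] unfolding eq0 .
  have c0: "\<nu> (cylinder 0 V) = measure P\<^sub>1 V"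
    using nu_marginal(2)[OF A0] measure_P1[of V] V S0_subset_borel unfolding eq0 by auto
  have \<pi>: "Transposition.transpose 0 i permutes {..<N}"
    using i Nn by (intro permutes_swap_id) auto
  have eq: "{x \<in> \<Omega> N. (\<lambda>l\<in>{..<N}. x (Transposition.transpose 0 i l)) \<in> cylinder 0 V} = cylinder i V"
    using Nn by (auto simp: cylinder_def \<Omega>_def)
  show "cylinder i V \<in> level_sets" using nu_permute(1)[OF \<pi> D0] unfolding eq .
  show "\<nu> (cylinder i V) = measure P\<^sub>1 V" using nu_permute(2)[OF \<pi> D0] c0 unfolding eq by simp
qed

section \<open>Inner regularity and the extension\<close>

abbreviation product_euclidean :: "(nat \<Rightarrow> 'a) topology" where
  "product_euclidean \<equiv> product_topology (\<lambda>_. euclidean) {..<N}"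

lemma Hausdorff_product_euclidean: "Hausdorff_space product_euclidean"
  using Hausdorff_space_product_topology Hausdorff_space_euclidean_t2 by blast

definition inner_compact :: "(nat \<Rightarrow> 'a) set \<Rightarrow> bool" where
  "inner_compact A \<longleftrightarrow> A \<in> level_sets \<and>
     (\<forall>e>0. \<exists>B\<in>level_sets. \<exists>C. B \<subseteq> C \<and> C \<subseteq> A \<and> compactin product_euclidean C \<and> \<nu> (A - B) \<le> e)"

lemma nu_mono: "A \<in> level_sets \<Longrightarrow> B \<in> level_sets \<Longrightarrow> A \<subseteq> B \<Longrightarrow> \<nu> A \<le> \<nu> B"
  using nu_additive nu_nonneg by (rule level.additive_mono_real)

lemma nu_empty: "\<nu> {} = 0"
  using additiveD[OF nu_additive, of "{}" "{}"] by simp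

lemma nu_Un_le:
  assumes A: "A \<in> level_sets" and B: "B \<in> level_sets"
  shows "\<nu> (A \<union> B) \<le> \<nu> A + \<nu> B"
proof -
  have BA: "B - A \<in> level_sets" using B A by (rule level.Diff)
  have "\<nu> (A \<union> B) = \<nu> A + \<nu> (B - A)"
    using additiveD[OF nu_additive, of A "B - A"] A BA by (simp add: Un_Diff_cancel)
  moreover have "\<nu> (B - A) \<le> \<nu> B" using BA B by (rule nu_mono) blast
  ultimately show ?thesis by simp
qed

lemma nu_subadditive:
  "finite I \<Longrightarrow> A ` I \<subseteq> level_sets \<Longrightarrow> \<nu> (\<Union>i\<in>I. A i) \<le> (\<Sum>i\<in>I. \<nu> (A i))"
  using nu_additive nu_nonneg by (rule level.additive_subadditive_real)

lemma nu_rectangle_Diff_le: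
  assumes V: "\<And>l. l < N \<Longrightarrow> V l \<in> S0" and T: "\<And>l. l < N \<Longrightarrow> T l \<in> S0"
  shows "\<nu> (PiE {..<N} V - PiE {..<N} T) \<le> (\<Sum>l<N. measure P\<^sub>1 (V l - T l))"
proof -
  have VT: "V l - T l \<in> S0" if "l < N" for l using S0_Diff V T that by auto
  have cyl: "cylinder l (V l - T l) \<in> level_sets" if "l < N" for l
    using that VT[OF that] by (rule nu_cylinder(1))
  have "PiE {..<N} V - PiE {..<N} T \<subseteq> (\<Union>l<N. cylinder l (V l - T l))"
    by (auto simp: cylinder_def \<Omega>_def PiE_iff)
  then have "\<nu> (PiE {..<N} V - PiE {..<N} T) \<le> \<nu> (\<Union>l<N. cylinder l (V l - T l))"
    using V T by (intro nu_mono level.Diff rectangle_in_level_sets level.finite_UN cyl) simp_all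
  also have "\<dots> \<le> (\<Sum>l<N. \<nu> (cylinder l (V l - T l)))"
    using cyl by (intro nu_subadditive) auto
  also have "\<dots> = (\<Sum>l<N. measure P\<^sub>1 (V l - T l))"
    using VT nu_cylinder(2) by (intro sum.cong) auto
  finally show ?thesis .
qed

lemma inner_compact_rectangle:
  assumes V: "\<And>l. l < N \<Longrightarrow> V l \<in> S0"
  shows "inner_compact (PiE {..<N} V)"
  unfolding inner_compact_def
proof (intro conjI allI impI)
  show "PiE {..<N} V \<in> level_sets" using V by (rule rectangle_in_level_sets)
  fix e :: real assume e: "0 < e"
  then have "0 < e / N" using Nn by simp
  with V S0_inner_compact have "\<forall>l\<in>{..<N}. \<exists>T K. T \<in> S0 \<and> compact K \<and> T \<subseteq> K \<and> K \<subseteq> V l \<and> measure P\<^sub>1 (V l - T) \<le> e / N"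
    by (metis lessThan_iff)
  then obtain T K where T: "\<And>l. l < N \<Longrightarrow> T l \<in> S0" and K: "\<And>l. l < N \<Longrightarrow> compact (K l)"
    and TK: "\<And>l. l < N \<Longrightarrow> T l \<subseteq> K l" "\<And>l. l < N \<Longrightarrow> K l \<subseteq> V l"
    and small: "\<And>l. l < N \<Longrightarrow> measure P\<^sub>1 (V l - T l) \<le> e / N"
    by (metis lessThan_iff)
  have "\<nu> (PiE {..<N} V - PiE {..<N} T) \<le> (\<Sum>l<N. measure P\<^sub>1 (V l - T l))"
    using V T by (rule nu_rectangle_Diff_le)
  also have "\<dots> \<le> (\<Sum>l<N. e / N)"
    using small by (intro sum_mono) auto
  also have "\<dots> = e" using Nn by simp
  finally have "\<nu> (PiE {..<N} V - PiE {..<N} T) \<le> e" .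
  moreover have "compactin product_euclidean (PiE {..<N} K)"
    using K by (simp add: compactin_PiE)
  moreover have "PiE {..<N} T \<subseteq> PiE {..<N} K" "PiE {..<N} K \<subseteq> PiE {..<N} V"
    using TK by (auto intro!: PiE_mono)
  ultimately show "\<exists>B\<in>level_sets. \<exists>C. B \<subseteq> C \<and> C \<subseteq> PiE {..<N} V \<and>
      compactin product_euclidean C \<and> \<nu> (PiE {..<N} V - B) \<le> e"
    using T by (intro bexI[of _ "PiE {..<N} T"] exI[of _ "PiE {..<N} K"])
      (auto intro: rectangle_in_level_sets)
qed

lemma inner_compact_empty: "inner_compact {}"
  unfolding inner_compact_def by (auto intro!: exI[of _ "{}"] simp: nu_empty)

lemma nu_subset_Un_le:
  assumes "X \<in> level_sets" "Y \<in> level_sets" "Z \<in> level_sets" "X \<subseteq> Y \<union> Z"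
  shows "\<nu> X \<le> \<nu> Y + \<nu> Z"
proof -
  have "\<nu> X \<le> \<nu> (Y \<union> Z)" using assms by (intro nu_mono level.Un)
  also have "\<dots> \<le> \<nu> Y + \<nu> Z" using assms(2,3) by (rule nu_Un_le)
  finally show ?thesis .
qed

lemma inner_compactE:
  assumes "inner_compact A" "0 < e"
  obtains B C where "B \<in> level_sets" "B \<subseteq> C" "C \<subseteq> A" "compactin product_euclidean C" "\<nu> (A - B) \<le> e"
  using assms unfolding inner_compact_def by blast

lemma inner_compact_Un:
  assumes A: "inner_compact A" and A': "inner_compact A'"
  shows "inner_compact (A \<union> A')"
  unfolding inner_compact_def
proof (intro conjI allI impI)
  have AD: "A \<in> level_sets" "A' \<in> level_sets" using A A' by (auto simp: inner_compact_def)
  then show "A \<union> A' \<in> level_sets" by (rule level.Un)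
  fix e :: real assume "0 < e"
  then have e: "0 < e / 2" by simp
  obtain B C where BC: "B \<in> level_sets" "B \<subseteq> C" "C \<subseteq> A" "compactin product_euclidean C" "\<nu> (A - B) \<le> e/2"
    using A e by (rule inner_compactE)
  obtain B' C' where BC': "B' \<in> level_sets" "B' \<subseteq> C'" "C' \<subseteq> A'" "compactin product_euclidean C'"
    "\<nu> (A' - B') \<le> e/2"
    using A' e by (rule inner_compactE)
  have "\<nu> (A \<union> A' - (B \<union> B')) \<le> \<nu> (A - B) + \<nu> (A' - B')"
    by (intro nu_subset_Un_le level.Diff level.Un AD BC(1) BC'(1)) blast
  then have "\<nu> (A \<union> A' - (B \<union> B')) \<le> e" using BC(5) BC'(5) by linarith
  moreover have "compactin product_euclidean (C \<union> C')"
    using BC(4) BC'(4) by (rule compactin_Un)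
  moreover have "B \<union> B' \<in> level_sets" using BC(1) BC'(1) by (rule level.Un)
  ultimately show "\<exists>B\<in>level_sets. \<exists>C. B \<subseteq> C \<and> C \<subseteq> A \<union> A' \<and> compactin product_euclidean C \<and> \<nu> (A \<union> A' - B) \<le> e"
    using BC(2,3) BC'(2,3) by (intro bexI[of _ "B \<union> B'"] exI[of _ "C \<union> C'"] conjI) auto
qed

lemma inner_compact_Int:
  assumes A: "inner_compact A" and A': "inner_compact A'"
  shows "inner_compact (A \<inter> A')"
  unfolding inner_compact_def
proof (intro conjI allI impI)
  have AD: "A \<in> level_sets" "A' \<in> level_sets" using A A' by (auto simp: inner_compact_def)
  then show "A \<inter> A' \<in> level_sets" by (rule level.Int)
  fix e :: real assume "0 < e"
  then have e: "0 < e / 2" by simp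
  obtain B C where BC: "B \<in> level_sets" "B \<subseteq> C" "C \<subseteq> A" "compactin product_euclidean C" "\<nu> (A - B) \<le> e/2"
    using A e by (rule inner_compactE)
  obtain B' C' where BC': "B' \<in> level_sets" "B' \<subseteq> C'" "C' \<subseteq> A'" "compactin product_euclidean C'"
    "\<nu> (A' - B') \<le> e/2"
    using A' e by (rule inner_compactE)
  have "\<nu> (A \<inter> A' - (B \<inter> B')) \<le> \<nu> (A - B) + \<nu> (A' - B')"
    by (intro nu_subset_Un_le level.Diff level.Int AD BC(1) BC'(1)) blast
  then have "\<nu> (A \<inter> A' - (B \<inter> B')) \<le> e" using BC(5) BC'(5) by linarith
  moreover have "compactin product_euclidean (C \<inter> C')"
    using compactin_imp_closedin[OF Hausdorff_product_euclidean BC(4)] BC'(4)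
    by (rule closed_Int_compactin)
  moreover have "B \<inter> B' \<in> level_sets" using BC(1) BC'(1) by (rule level.Int)
  ultimately show "\<exists>B\<in>level_sets. \<exists>C. B \<subseteq> C \<and> C \<subseteq> A \<inter> A' \<and> compactin product_euclidean C \<and> \<nu> (A \<inter> A' - B) \<le> e"
    using BC(2,3) BC'(2,3) by (intro bexI[of _ "B \<inter> B'"] exI[of _ "C \<inter> C'"] conjI) auto
qed

lemma inner_compact_finite_UN:
  fixes m :: nat
  shows "(\<And>l. l < m \<Longrightarrow> inner_compact (A l)) \<Longrightarrow> inner_compact (\<Union>l<m. A l)"
  by (induction m) (auto simp: lessThan_Suc inner_compact_empty inner_compact_Un)

definition regular_sets :: "(nat \<Rightarrow> 'a) set set" where
  "regular_sets = {A. inner_compact A \<and> inner_compact (\<Omega> N - A)}"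

lemma regular_sets_subset_level_sets: "regular_sets \<subseteq> level_sets"
  by (auto simp: regular_sets_def inner_compact_def)

lemma Compl_rectangle:
  "\<Omega> N - PiE {..<N} V = (\<Union>l<N. PiE {..<N} (\<lambda>m. if m = l then - V l else UNIV))"
proof (intro equalityI subsetI)
  fix x assume x: "x \<in> \<Omega> N - PiE {..<N} V"
  then obtain l where l: "l < N" "x l \<notin> V l" by (auto simp: \<Omega>_def PiE_iff)
  have "x \<in> PiE {..<N} (\<lambda>m. if m = l then - V l else UNIV)"
    using x l by (auto simp: \<Omega>_def PiE_iff)
  with l show "x \<in> (\<Union>l<N. PiE {..<N} (\<lambda>m. if m = l then - V l else UNIV))" by blast
next
  fix x assume "x \<in> (\<Union>l<N. PiE {..<N} (\<lambda>m. if m = l then - V l else UNIV))"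
  then obtain l where l: "l < N" "x \<in> PiE {..<N} (\<lambda>m. if m = l then - V l else UNIV)" by blast
  then have "x l \<notin> V l" by (auto simp: PiE_iff dest: bspec[of _ _ l])
  with l show "x \<in> \<Omega> N - PiE {..<N} V" by (auto simp: \<Omega>_def PiE_iff)
qed

lemma rectangle_in_regular_sets:
  assumes V: "\<And>l. l < N \<Longrightarrow> V l \<in> S0"
  shows "PiE {..<N} V \<in> regular_sets"
proof -
  have "\<Omega> N - PiE {..<N} V = (\<Union>l<N. PiE {..<N} (\<lambda>m. if m = l then - V l else UNIV))"
    by (rule Compl_rectangle)
  moreover have "inner_compact (\<Union>l<N. PiE {..<N} (\<lambda>m. if m = l then - V l else UNIV))"
    using V by (intro inner_compact_finite_UN inner_compact_rectangle) (auto intro: UNIV_in_S0 S0_Compl)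
  ultimately show ?thesis
    using inner_compact_rectangle[OF V] by (simp add: regular_sets_def)
qed

lemma algebra_regular_sets: "algebra (\<Omega> N) regular_sets"
  unfolding algebra_iff_Un
proof (intro conjI ballI)
  show "regular_sets \<subseteq> Pow (\<Omega> N)"
    using regular_sets_subset_level_sets level.sets_into_space by blast
  have "\<Omega> N \<in> regular_sets"
    using rectangle_in_regular_sets[of "\<lambda>_. UNIV"] UNIV_in_S0 by (simp add: \<Omega>_def)
  then show "{} \<in> regular_sets" by (simp add: regular_sets_def)
  fix A assume A: "A \<in> regular_sets"
  then have "\<Omega> N - (\<Omega> N - A) = A"
    using regular_sets_subset_level_sets level.sets_into_space by blast
  with A show "\<Omega> N - A \<in> regular_sets" by (simp add: regular_sets_def)
  fix B assume B: "B \<in> regular_sets"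
  have "\<Omega> N - (A \<union> B) = (\<Omega> N - A) \<inter> (\<Omega> N - B)" by auto
  with A B show "A \<union> B \<in> regular_sets"
    by (simp add: regular_sets_def inner_compact_Un inner_compact_Int)
qed

lemma sigma_regular_sets: "sigma_sets (\<Omega> N) regular_sets = sets (prodB N)"
proof
  show "sigma_sets (\<Omega> N) regular_sets \<subseteq> sets (prodB N)"
    using regular_sets_subset_level_sets level_sets_subset_prodB
    by (metis sets.sigma_sets_subset space_prodB subset_trans)
  have "rectangles N \<subseteq> regular_sets"
    unfolding rectangles_def using rectangle_in_regular_sets by auto
  then show "sets (prodB N) \<subseteq> sigma_sets (\<Omega> N) regular_sets"
    unfolding sets_prodB_rectangles by (rule sigma_sets_mono')
qed

lemma nu_empty_continuous:
  assumes "range A \<subseteq> regular_sets" "decseq A" "(\<Inter>i. A i) = {}"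
  shows "(\<lambda>i. \<nu> (A i)) \<longlonglongrightarrow> 0"
proof (rule level.compact_inner_approx_empty_continuous
      [OF nu_additive nu_nonneg Hausdorff_product_euclidean _ assms(2,3)])
  show "range A \<subseteq> level_sets" using assms(1) regular_sets_subset_level_sets by blast
  show "\<exists>B\<in>level_sets. \<exists>C. B \<subseteq> C \<and> C \<subseteq> A i \<and> compactin product_euclidean C \<and> \<nu> (A i - B) \<le> e"
    if "0 < e" for i e
  proof -
    from assms(1) have "inner_compact (A i)" by (auto simp: regular_sets_def)
    with that show ?thesis unfolding inner_compact_def by blast
  qed
qed

sublocale regular: algebra "\<Omega> N" regular_sets
  by (rule algebra_regular_sets)

lemma nu_caratheodory:
  obtains \<mu> where "\<And>A. A \<in> regular_sets \<Longrightarrow> \<mu> A = ennreal (\<nu> A)"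
    "measure_space (\<Omega> N) (sets (prodB N)) \<mu>"
proof -
  have "\<exists>\<mu>. (\<forall>A\<in>regular_sets. \<mu> A = ennreal (\<nu> A)) \<and> measure_space (\<Omega> N) (sigma_sets (\<Omega> N) regular_sets) \<mu>"
  proof (rule regular.caratheodory_empty_continuous)
    show "positive regular_sets (\<lambda>A. ennreal (\<nu> A))" by (simp add: positive_def nu_empty)
    show "additive regular_sets (\<lambda>A. ennreal (\<nu> A))"
      unfolding additive_def
    proof (intro ballI impI)
      fix A B assume "A \<in> regular_sets" "B \<in> regular_sets" "A \<inter> B = {}"
      then have "\<nu> (A \<union> B) = \<nu> A + \<nu> B"
        using regular_sets_subset_level_sets by (intro additiveD[OF nu_additive]) auto
      then show "ennreal (\<nu> (A \<union> B)) = ennreal (\<nu> A) + ennreal (\<nu> B)"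
        by (simp add: ennreal_plus nu_nonneg)
    qed
    fix A :: "nat \<Rightarrow> (nat \<Rightarrow> 'a) set"
    assume "range A \<subseteq> regular_sets" "decseq A" "(\<Inter>i. A i) = {}"
    then show "(\<lambda>i. ennreal (\<nu> (A i))) \<longlonglongrightarrow> 0"
      using tendsto_ennrealI[OF nu_empty_continuous] by simp
  qed simp
  with that show thesis unfolding sigma_regular_sets by blast
qed

lemma extension_exists:
  obtains Q' where "prob_space Q'" "sets Q' = sets (prodB N)" "\<And>A. A \<in> regular_sets \<Longrightarrow> measure Q' A = \<nu> A"
proof -
  obtain \<mu> where \<mu>: "\<And>A. A \<in> regular_sets \<Longrightarrow> \<mu> A = ennreal (\<nu> A)"
    and ms: "measure_space (\<Omega> N) (sets (prodB N)) \<mu>"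
    using nu_caratheodory by metis
  define Q' where "Q' = measure_of (\<Omega> N) (sets (prodB N)) \<mu>"
  have sets_Q': "sets Q' = sets (prodB N)"
    unfolding Q'_def using sets.space_closed[of "prodB N"] by (simp add: sets.sigma_sets_eq[of "prodB N", simplified])
  have emeasure_Q': "emeasure Q' A = ennreal (\<nu> A)" if "A \<in> regular_sets" for A
  proof -
    have "A \<in> sets (prodB N)"
      using that regular_sets_subset_level_sets level_sets_subset_prodB by blast
    then show ?thesis
      unfolding Q'_def using ms that \<mu> unfolding measure_space_def
      by (simp add: emeasure_measure_of_sigma)
  qed
  have prob: "prob_space Q'"
  proof
    show "emeasure Q' (space Q') = 1"
      using emeasure_Q'[OF regular.top] nu_space sets_eq_imp_space_eq[OF sets_Q'] by simp
  qed
  have "measure Q' A = \<nu> A" if "A \<in> regular_sets" for A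
    using emeasure_Q'[OF that] nu_nonneg by (simp add: measure_def)
  with prob sets_Q' show thesis by (rule that)
qed

lemma permute_rectangle:
  assumes \<pi>: "\<pi> permutes {..<N}"
  shows "{x \<in> \<Omega> N. (\<lambda>i\<in>{..<N}. x (\<pi> i)) \<in> PiE {..<N} V} = PiE {..<N} (\<lambda>l. V (inv \<pi> l))"
proof -
  have inv: "inv \<pi> l < N" if "l < N" for l
    using permutes_in_image[OF permutes_inv[OF \<pi>], of l] that by auto
  have pi: "\<pi> i < N" if "i < N" for i
    using permutes_in_image[OF \<pi>, of i] that by auto
  show ?thesis
  proof (intro equalityI subsetI)
    fix x assume x: "x \<in> {x \<in> \<Omega> N. (\<lambda>i\<in>{..<N}. x (\<pi> i)) \<in> PiE {..<N} V}"
    have "x l \<in> V (inv \<pi> l)" if "l < N" for l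
    proof -
      have "x (\<pi> (inv \<pi> l)) \<in> V (inv \<pi> l)" using x inv[OF that] by (auto simp: PiE_iff)
      then show ?thesis using permutes_inverses(1)[OF \<pi>, of l] by simp
    qed
    with x show "x \<in> PiE {..<N} (\<lambda>l. V (inv \<pi> l))" by (auto simp: \<Omega>_def PiE_iff)
  next
    fix x assume x: "x \<in> PiE {..<N} (\<lambda>l. V (inv \<pi> l))"
    have "x (\<pi> i) \<in> V i" if "i < N" for i
    proof -
      have "x (\<pi> i) \<in> V (inv \<pi> (\<pi> i))" using x pi[OF that] by (auto simp: PiE_iff)
      then show ?thesis using permutes_inverses(2)[OF \<pi>, of i] by simp
    qed
    with x show "x \<in> {x \<in> \<Omega> N. (\<lambda>i\<in>{..<N}. x (\<pi> i)) \<in> PiE {..<N} V}"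
      by (auto simp: \<Omega>_def PiE_iff)
  qed
qed

lemma extension_exchangeable:
  assumes Q': "prob_space Q'" "sets Q' = sets (prodB N)" "\<And>A. A \<in> regular_sets \<Longrightarrow> measure Q' A = \<nu> A"
  shows "exchangeable borel N Q'"
  unfolding exchangeable_def
proof (intro conjI allI impI)
  fix \<pi> assume \<pi>: "\<pi> permutes {..<N}"
  let ?f = "\<lambda>x. \<lambda>i\<in>{..<N}. x (\<pi> i)"
  have f: "?f \<in> measurable Q' (prodB N)"
    using measurable_permute[OF \<pi>] by (simp add: measurable_cong_sets[OF Q'(2) refl])
  show "distr Q' (prodB N) ?f = Q'"
  proof (rule prob_space_eq_on_rectangles)
    show "prob_space (distr Q' (prodB N) ?f)" using Q'(1) f by (rule prob_space.prob_space_distr)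
    fix X assume "X \<in> rectangles N"
    then obtain V where V: "\<And>l. l < N \<Longrightarrow> V l \<in> S0" and X: "X = PiE {..<N} V"
      unfolding rectangles_def by auto
    have V': "V (inv \<pi> l) \<in> S0" if "l < N" for l
      using V permutes_in_image[OF permutes_inv[OF \<pi>], of l] that by auto
    have "measure (distr Q' (prodB N) ?f) X = measure Q' (?f -` X \<inter> space Q')"
      using f X V rectangle_in_regular_sets regular_sets_subset_level_sets level_sets_subset_prodB
      by (intro measure_distr) auto
    also have "?f -` X \<inter> space Q' = PiE {..<N} (\<lambda>l. V (inv \<pi> l))"
      unfolding X sets_eq_imp_space_eq[OF Q'(2)] space_prodB permute_rectangle[OF \<pi>, symmetric]
      by blast
    also have "measure Q' \<dots> = \<nu> (PiE {..<N} (\<lambda>l. V (inv \<pi> l)))"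
      using V' by (intro Q'(3) rectangle_in_regular_sets)
    also have "\<dots> = \<nu> X"
      using nu_permute(2)[OF \<pi> rectangle_in_level_sets[OF V]] unfolding permute_rectangle[OF \<pi>] X .
    also have "\<dots> = measure Q' X"
      using V X by (simp add: Q'(3) rectangle_in_regular_sets)
    finally show "measure (distr Q' (prodB N) ?f) X = measure Q' X" .
  qed (use Q' in simp_all)
qed (use Q' in simp_all)

lemma marginal_rectangle:
  "{x \<in> \<Omega> N. restrict x {..<n} \<in> PiE {..<n} V} = PiE {..<N} (\<lambda>l. if l < n then V l else UNIV)"
proof (intro equalityI subsetI)
  fix x assume "x \<in> {x \<in> \<Omega> N. restrict x {..<n} \<in> PiE {..<n} V}"
  then have "x \<in> extensional {..<N}" "\<forall>l<n. x l \<in> V l"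
    by (simp_all add: \<Omega>_def PiE_iff restrict_PiE_iff)
  then show "x \<in> PiE {..<N} (\<lambda>l. if l < n then V l else UNIV)"
    by (simp add: PiE_iff)
next
  fix x assume x: "x \<in> PiE {..<N} (\<lambda>l. if l < n then V l else UNIV)"
  have "x l \<in> V l" if "l < n" for l
    using PiE_mem[OF x, of l] that Nn by simp
  with x show "x \<in> {x \<in> \<Omega> N. restrict x {..<n} \<in> PiE {..<n} V}"
    by (simp add: \<Omega>_def PiE_iff restrict_PiE_iff)
qed

lemma extension_marginal:
  assumes Q': "prob_space Q'" "sets Q' = sets (prodB N)" "\<And>A. A \<in> regular_sets \<Longrightarrow> measure Q' A = \<nu> A"
    and A: "A \<in> sets (prodB n)"
  shows "measure P A = measure Q' {x \<in> space (prodB N). restrict x {..<n} \<in> A}"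
proof -
  let ?f = "\<lambda>x. restrict x {..<n}"
  have "?f \<in> measurable (prodB N) (prodB n)"
    using Nn by (intro measurable_restrict_subset) auto
  then have f: "?f \<in> measurable Q' (prodB n)"
    by (simp add: measurable_cong_sets[OF Q'(2) refl])
  have "P = distr Q' (prodB n) ?f"
  proof (rule prob_space_eq_on_rectangles)
    show "prob_space (distr Q' (prodB n) ?f)" using Q'(1) f by (rule prob_space.prob_space_distr)
    fix X assume "X \<in> rectangles n"
    then obtain V where V: "\<And>l. l < n \<Longrightarrow> V l \<in> S0" and X: "X = PiE {..<n} V"
      unfolding rectangles_def by auto
    obtain j where "PiE {..<n} V \<in> sets (prodG j n)" by (rule rectangle_in_prodG[OF V])
    then have Xj: "X \<in> sets (prodG j n)" unfolding X .
    have V': "(if l < n then V l else UNIV) \<in> S0" for l using V UNIV_in_S0 by auto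
    have "measure P X = \<nu> (PiE {..<N} (\<lambda>l. if l < n then V l else UNIV))"
      using nu_marginal(2)[OF Xj] unfolding X marginal_rectangle ..
    also have "\<dots> = measure Q' (PiE {..<N} (\<lambda>l. if l < n then V l else UNIV))"
      using V' by (intro Q'(3)[symmetric] rectangle_in_regular_sets)
    also have "PiE {..<N} (\<lambda>l. if l < n then V l else UNIV) = ?f -` X \<inter> space Q'"
      unfolding X sets_eq_imp_space_eq[OF Q'(2)] space_prodB marginal_rectangle[symmetric] by blast
    also have "measure Q' \<dots> = measure (distr Q' (prodB n) ?f) X"
      using f Xj sets_prodG_subset_prodB by (intro measure_distr[symmetric]) auto
    finally show "measure P X = measure (distr Q' (prodB n) ?f) X" .
  qed (use prob_space_P sets_P in simp_all)
  then have "measure P A = measure Q' (?f -` A \<inter> space Q')"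
    using f A by (simp add: measure_distr)
  also have "?f -` A \<inter> space Q' = {x \<in> space (prodB N). restrict x {..<n} \<in> A}"
    unfolding sets_eq_imp_space_eq[OF Q'(2)] by blast
  finally show ?thesis .
qed

lemma extendible: "extendible borel n N P"
proof -
  obtain Q' where Q': "prob_space Q'" "sets Q' = sets (prodB N)" "\<And>A. A \<in> regular_sets \<Longrightarrow> measure Q' A = \<nu> A"
    using extension_exists by metis
  show ?thesis
    unfolding extendible_def using exch extension_exchangeable[OF Q'] extension_marginal[OF Q'] by blast
qed
end

theorem theorem6:
  fixes S0 :: "'a::t2_space set set"
    and P :: "(nat \<Rightarrow> 'a) measure"
    and G :: "nat \<Rightarrow> 'a set set"
    and Pk :: "nat \<Rightarrow> (nat \<Rightarrow> 'a) measure"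
    and n N :: nat
  assumes lc: "locally_compact_space (euclidean :: 'a topology)"
    and alg: "algebra UNIV S0"
    and gen: "sigma_sets UNIV S0 = sets (borel :: 'a measure)"
    and n_pos: "0 < n"
    and exch: "exchangeable borel n P"
    and tight: "\<And>\<epsilon>. \<epsilon> > 0 \<Longrightarrow> \<exists>V \<in> S0. \<exists>K. compact K \<and> V \<subseteq> K \<and>
        measure P {x \<in> space (PiM {..<n} (\<lambda>_. borel)). x 0 \<in> V} \<ge> 1 - \<epsilon>"
    and reg: "\<And>\<epsilon> V. \<epsilon> > 0 \<Longrightarrow> V \<in> S0 \<Longrightarrow> \<exists>U W. open U \<and> W \<in> S0 \<and> V \<subseteq> U \<and> U \<subseteq> W \<and>
        measure P {x \<in> space (PiM {..<n} (\<lambda>_. borel)). x 0 \<in> W - V} \<le> \<epsilon>"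
    and G_sigma: "\<And>k. sigma_algebra UNIV (G k)"
    and G_inc: "\<And>k. G k \<subseteq> G (Suc k)"
    and G_union: "(\<Union>k. G k) = S0"
    and Pk_prob: "\<And>k. prob_space (Pk k)"
    and Pk_sets: "\<And>k. sets (Pk k) = sets (PiM {..<n} (\<lambda>_. sigma UNIV (G k)))"
    and conv: "(\<lambda>k. SUP A \<in> sets (PiM {..<n} (\<lambda>_. sigma UNIV (G k))).
                  \<bar>measure (Pk k) A - measure P A\<bar>) \<longlonglongrightarrow> 0"
    and Nn: "N > n"
    and Pk_ext: "\<And>k. extendible (sigma UNIV (G k)) n N (Pk k)"
  shows "extendible borel n N P"
proof -
  interpret extendible_limit S0 P G Pk n N
    by (rule extendible_limit.intro[OF alg gen n_pos exch tight reg G_sigma G_inc G_union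
          Pk_prob conv Nn Pk_ext])
  show ?thesis by (rule extendible)
qed

end
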